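(* Let $G$ be a graph of order $n\geq 3$ such that $d(u)+d(v)\geq n-1$ for every pair of non-adjacent vertices $u,v\in V(G)$. Then $prc(G)=\chi'(G)$.
   Context: A path in an edge-coloured graph is a rainbow path if its edges receive pairwise distinct colours. The proper rainbow connection number $prc(G)$ of a connected graph is the minimum number of colours in a proper edge-colouring (adjacent edges get distinct colours) such that every two distinct vertices are joined by a rainbow path. $\chi'(G)$ is the chromatic index; $d(u)$ is the degree of $u$. *)

theory Defs
  imports Main
begin

definition simple_graph :: "'a set \<Rightarrow> 'a set set \<Rightarrow> bool" where
  "simple_graph V E \<longleftrightarrow> finite V \<and> (\<forall>e\<in>E. \<exists>u v. e = {u, v} \<and> u \<in> V \<and> v \<in> V \<and> u \<noteq> v)"

definition degree :: "'a set \<Rightarrow> 'a set set \<Rightarrow> 'a \<Rightarrow> nat" where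
  "degree V E u = card {v \<in> V. {u, v} \<in> E}"

definition is_path :: "'a set \<Rightarrow> 'a set set \<Rightarrow> 'a list \<Rightarrow> bool" where
  "is_path V E p \<longleftrightarrow> p \<noteq> [] \<and> set p \<subseteq> V \<and> distinct p \<and>
     (\<forall>i. Suc i < length p \<longrightarrow> {p ! i, p ! Suc i} \<in> E)"

definition rainbow_path :: "'a set \<Rightarrow> 'a set set \<Rightarrow> ('a set \<Rightarrow> nat) \<Rightarrow> 'a list \<Rightarrow> bool" where
  "rainbow_path V E c p \<longleftrightarrow> is_path V E p \<and>
     inj_on (\<lambda>i. c {p ! i, p ! Suc i}) {i. Suc i < length p}"

definition proper_edge_colouring :: "'a set set \<Rightarrow> ('a set \<Rightarrow> nat) \<Rightarrow> nat \<Rightarrow> bool" where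
  "proper_edge_colouring E c k \<longleftrightarrow> (\<forall>e\<in>E. c e < k) \<and>
     (\<forall>e\<in>E. \<forall>f\<in>E. e \<noteq> f \<and> e \<inter> f \<noteq> {} \<longrightarrow> c e \<noteq> c f)"

definition rainbow_connected :: "'a set \<Rightarrow> 'a set set \<Rightarrow> ('a set \<Rightarrow> nat) \<Rightarrow> bool" where
  "rainbow_connected V E c \<longleftrightarrow> (\<forall>u\<in>V. \<forall>v\<in>V. u \<noteq> v \<longrightarrow>
     (\<exists>p. rainbow_path V E c p \<and> hd p = u \<and> last p = v))"

definition chromatic_index :: "'a set set \<Rightarrow> nat" where
  "chromatic_index E = (LEAST k. \<exists>c. proper_edge_colouring E c k)"

definition proper_rainbow_connection_number :: "'a set \<Rightarrow> 'a set set \<Rightarrow> nat" where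
  "proper_rainbow_connection_number V E =
     (LEAST k. \<exists>c. proper_edge_colouring E c k \<and> rainbow_connected V E c)"

end

theory Submission
  imports Defs
begin

text \<open>The degree condition forces any two non-adjacent vertices to have a common
  neighbour, i.e. the graph has diameter at most two. In a proper edge colouring the
  two edges of a path of length two meet, so they get distinct colours: every proper
  edge colouring is rainbow connecting, and the two minima defining \<open>prc(G)\<close> and
  \<open>\<chi>'(G)\<close> range over the same colourings.\<close>

lemma simple_graph_no_loop:
  assumes "simple_graph V E"
  shows "{x, x} \<notin> E"
  using assms unfolding simple_graph_def by (metis doubleton_eq_iff)

lemma simple_graph_edge_in_vertices:
  assumes "simple_graph V E" and "{u, v} \<in> E"
  shows "u \<in> V" and "v \<in> V"
  using assms unfolding simple_graph_def by (metis doubleton_eq_iff)+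

lemma degree_sum_imp_common_neighbour:
  assumes sg: "simple_graph V E"
    and u: "u \<in> V" and v: "v \<in> V" and "u \<noteq> v" and non_adj: "{u, v} \<notin> E"
    and deg: "degree V E u + degree V E v \<ge> card V - 1"
  obtains w where "w \<in> V" "{u, w} \<in> E" "{w, v} \<in> E"
proof (rule ccontr)
  assume no_common: "\<not> thesis"
  have fin: "finite V" using sg by (simp add: simple_graph_def)
  define N\<^sub>u where "N\<^sub>u = {x \<in> V. {u, x} \<in> E}"
  define N\<^sub>v where "N\<^sub>v = {x \<in> V. {v, x} \<in> E}"
  have N_sub: "N\<^sub>u \<union> N\<^sub>v \<subseteq> V - {u, v}"
    unfolding N\<^sub>u_def N\<^sub>v_def using simple_graph_no_loop[OF sg] non_adj
    by (auto simp: insert_commute)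
  have "N\<^sub>u \<inter> N\<^sub>v = {}"
    using no_common that unfolding N\<^sub>u_def N\<^sub>v_def by (auto simp: insert_commute)
  then have "card N\<^sub>u + card N\<^sub>v = card (N\<^sub>u \<union> N\<^sub>v)"
    using fin by (simp add: card_Un_disjoint N\<^sub>u_def N\<^sub>v_def)
  also have "\<dots> \<le> card (V - {u, v})"
    using N_sub fin by (intro card_mono) auto
  also have "\<dots> = card V - 2"
    using u v \<open>u \<noteq> v\<close> fin by (simp add: card_Diff_subset)
  finally show False
    using deg \<open>u \<noteq> v\<close> u v fin card_mono[of V "{u, v}"]
    unfolding degree_def N\<^sub>u_def N\<^sub>v_def by auto
qed

lemma rainbow_path_edge:
  assumes sg: "simple_graph V E" and uv: "{u, v} \<in> E"
  shows "rainbow_path V E c [u, v]"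
proof -
  have "u \<noteq> v" using simple_graph_no_loop[OF sg] uv by metis
  moreover have "\<forall>i. Suc i < length [u, v] \<longrightarrow> {[u, v] ! i, [u, v] ! Suc i} \<in> E"
    using uv by (auto simp: less_Suc_eq)
  moreover have "{i. Suc i < length [u, v]} = {0}" by auto
  ultimately show ?thesis
    using simple_graph_edge_in_vertices[OF sg uv]
    by (simp add: rainbow_path_def is_path_def)
qed

lemma rainbow_path_two_edges:
  assumes sg: "simple_graph V E" and c: "proper_edge_colouring E c k"
    and uw: "{u, w} \<in> E" and wv: "{w, v} \<in> E" and "u \<noteq> v"
  shows "rainbow_path V E c [u, w, v]"
proof -
  have "u \<noteq> w" "w \<noteq> v" using simple_graph_no_loop[OF sg] uw wv by metis+
  have "{u, w} \<noteq> {w, v}" using \<open>u \<noteq> v\<close> by (auto simp: doubleton_eq_iff)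
  moreover have "{u, w} \<inter> {w, v} \<noteq> {}" by blast
  ultimately have colours: "c {u, w} \<noteq> c {w, v}"
    using c uw wv unfolding proper_edge_colouring_def by simp
  have edges: "\<forall>i. Suc i < length [u, w, v] \<longrightarrow> {[u, w, v] ! i, [u, w, v] ! Suc i} \<in> E"
    using uw wv by (auto simp: less_Suc_eq)
  have "{i. Suc i < length [u, w, v]} = {0, 1}" by (auto simp: less_Suc_eq)
  then show ?thesis
    using simple_graph_edge_in_vertices[OF sg uw] simple_graph_edge_in_vertices[OF sg wv]
      \<open>u \<noteq> v\<close> \<open>u \<noteq> w\<close> \<open>w \<noteq> v\<close> edges colours
    by (simp add: rainbow_path_def is_path_def)
qed

lemma proper_edge_colouring_rainbow_connected_if_diameter_le_2:
  assumes sg: "simple_graph V E" and c: "proper_edge_colouring E c k"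
    and diam: "\<And>u v. u \<in> V \<Longrightarrow> v \<in> V \<Longrightarrow> u \<noteq> v \<Longrightarrow> {u, v} \<notin> E \<Longrightarrow>
                 \<exists>w. {u, w} \<in> E \<and> {w, v} \<in> E"
  shows "rainbow_connected V E c"
  unfolding rainbow_connected_def
proof (intro ballI impI)
  fix u v assume "u \<in> V" "v \<in> V" "u \<noteq> v"
  show "\<exists>p. rainbow_path V E c p \<and> hd p = u \<and> last p = v"
  proof (cases "{u, v} \<in> E")
    case True
    then show ?thesis using rainbow_path_edge[OF sg] by fastforce
  next
    case False
    then obtain w where "{u, w} \<in> E" "{w, v} \<in> E"
      using diam \<open>u \<in> V\<close> \<open>v \<in> V\<close> \<open>u \<noteq> v\<close> by blast
    then show ?thesis using rainbow_path_two_edges[OF sg c _ _ \<open>u \<noteq> v\<close>] by fastforce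
  qed
qed

lemma proper_rainbow_connection_number_eq_chromatic_index:
  assumes "\<And>c k. proper_edge_colouring E c k \<Longrightarrow> rainbow_connected V E c"
  shows "proper_rainbow_connection_number V E = chromatic_index E"
  unfolding proper_rainbow_connection_number_def chromatic_index_def
  using assms by metis

theorem proposition5p9:
  fixes V :: "'a set" and E :: "'a set set"
  assumes "simple_graph V E"
    and "card V \<ge> 3"
    and "\<forall>u\<in>V. \<forall>v\<in>V. u \<noteq> v \<and> {u, v} \<notin> E \<longrightarrow> degree V E u + degree V E v \<ge> card V - 1"
  shows "proper_rainbow_connection_number V E = chromatic_index E"
proof (rule proper_rainbow_connection_number_eq_chromatic_index)
  fix c k assume "proper_edge_colouring E c k"
  moreover have "\<exists>w. {u, w} \<in> E \<and> {w, v} \<in> E"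
    if "u \<in> V" "v \<in> V" "u \<noteq> v" "{u, v} \<notin> E" for u v
    using degree_sum_imp_common_neighbour[OF assms(1) that] assms(3) that by blast
  ultimately show "rainbow_connected V E c"
    using proper_edge_colouring_rainbow_connected_if_diameter_le_2[OF assms(1)] by blast
qed

end
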